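(* Fix marginals $F_N$ and $F_X$ with $E[N]<\infty$, $E[X]<\infty$. Let $S$ be the aggregate claim amount of any CRM $(N,\underline X)\in\aleph^{FGM}$ with these marginals, and let $S^{(\triangle,\triangle)}$ be the aggregate claim amount of the CRM in $\aleph^{FGM}$ with the same marginals whose associated symmetric Bernoulli sequence is comonotonic, i.e. $\Pr(I_0=\dots=I_k=0)=\Pr(I_0=\dots=I_k=1)=\tfrac12$ for every $k$. Then $S\preceq_{icx}S^{(\triangle,\triangle)}$.
   Context: Collective risk model (CRM): $N$ is a random variable with values in $\mathbb{N}_0$, cdf $F_N$, support $A_N$; $\underline X=\{X_j\}_{j\ge1}$ is a sequence of identically distributed strictly positive random variables with common cdf $F_X$ (generic copy $X$); $S=\sum_{j\ge1}X_j\mathbb{1}_{\{N\ge j\}}$. A $d$-variate FGM copula with parameters $\theta_{j_1\dots j_k}$ is $C(u_1,\dots,u_d)=\prod_{m=1}^d u_m\big(1+\sum_{k=2}^d\sum_{j_1<\dots<j_k}\theta_{j_1\dots j_k}\bar u_{j_1}\cdots\bar u_{j_k}\big)$, $\bar u=1-u$, with parameters such that $1+\sum_{k}\sum_{j_1<\dots<j_k}\theta_{j_1\dots j_k}\varepsilon_{j_1}\cdots\varepsilon_{j_k}\ge0$ for all $\varepsilon\in\{-1,1\}^d$. To it is associated the random vector $\boldsymbol I$ on $\{0,1\}^d$ with pmf $f_{\boldsymbol I}(\boldsymbol i)=2^{-d}\big(1+\sum_{k=2}^d\sum_{j_1<\dots<j_k}(-1)^{i_{j_1}+\dots+i_{j_k}}\theta_{j_1\dots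 j_k}\big)$; this is a bijection between FGM copulas and distributions on $\{0,1\}^d$ with Bernoulli$(1/2)$ margins. A CRM belongs to $\aleph^{FGM}$ if for every $k\in\mathbb{N}_1$, $k\le\sup A_N$, $F_{N,X_1,\dots,X_k}(n,x_1,\dots,x_k)=C_k(F_N(n),F_X(x_1),\dots,F_X(x_k))$ for a $(k+1)$-variate FGM copula $C_k$ with coordinates indexed $0,\dots,k$ (index $0$ for $N$); the associated vectors $(I_0,\dots,I_k)$ form a consistent sequence $\{I_j\}_{j\ge0}$. Increasing convex order: $Z\preceq_{icx}Z^\dagger$ if $E[\phi(Z)]\le E[\phi(Z^\dagger)]$ for all increasing convex $\phi$ for which the expectations exist. *)

theory Defs
  imports "HOL-Probability.Probability"
begin

definition fgm_index :: "nat \<Rightarrow> nat set set" where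
  "fgm_index d = {J. J \<subseteq> {..<d} \<and> 2 \<le> card J}"

definition fgm_valid :: "nat \<Rightarrow> (nat set \<Rightarrow> real) \<Rightarrow> bool" where
  "fgm_valid d \<theta> \<longleftrightarrow>
     (\<forall>\<epsilon> :: nat \<Rightarrow> real. (\<forall>m<d. \<epsilon> m = 1 \<or> \<epsilon> m = -1) \<longrightarrow>
        0 \<le> 1 + (\<Sum>J\<in>fgm_index d. \<theta> J * (\<Prod>j\<in>J. \<epsilon> j)))"

definition fgm_copula :: "nat \<Rightarrow> (nat set \<Rightarrow> real) \<Rightarrow> (nat \<Rightarrow> real) \<Rightarrow> real" where
  "fgm_copula d \<theta> u =
     (\<Prod>m<d. u m) * (1 + (\<Sum>J\<in>fgm_index d. \<theta> J * (\<Prod>j\<in>J. 1 - u j)))"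

text \<open>pmf of the associated symmetric Bernoulli vector I on {0,1}^d.\<close>
definition fgm_pmf :: "nat \<Rightarrow> (nat set \<Rightarrow> real) \<Rightarrow> (nat \<Rightarrow> nat) \<Rightarrow> real" where
  "fgm_pmf d \<theta> i =
     (1/2) ^ d * (1 + (\<Sum>J\<in>fgm_index d. (-1) ^ (\<Sum>j\<in>J. i j) * \<theta> J))"

definition below_sup_support :: "'a measure \<Rightarrow> ('a \<Rightarrow> nat) \<Rightarrow> nat \<Rightarrow> bool" where
  "below_sup_support M N k \<longleftrightarrow> (\<exists>n. k \<le> n \<and> measure M {\<omega>\<in>space M. N \<omega> = n} > 0)"

text \<open>The parameters are given as a
  single function on finite subsets of the index set, the copula C_k using those on
  subsets of {0..k}; this encodes the consistency of the sequence (I_0,...,I_k).\<close>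
definition crm_fgm ::
  "'a measure \<Rightarrow> ('a \<Rightarrow> nat) \<Rightarrow> (nat \<Rightarrow> 'a \<Rightarrow> real) \<Rightarrow> (real \<Rightarrow> real) \<Rightarrow> (real \<Rightarrow> real)
     \<Rightarrow> (nat set \<Rightarrow> real) \<Rightarrow> bool" where
  "crm_fgm M N X FN FX \<theta> \<longleftrightarrow>
     prob_space M \<and>
     N \<in> measurable M (count_space UNIV) \<and>
     (\<forall>j\<ge>1. X j \<in> borel_measurable M \<and> (\<forall>\<omega>\<in>space M. 0 < X j \<omega>)) \<and>
     (\<forall>t. measure M {\<omega>\<in>space M. real (N \<omega>) \<le> t} = FN t) \<and>
     (\<forall>j\<ge>1. \<forall>x. measure M {\<omega>\<in>space M. X j \<omega> \<le> x} = FX x) \<and>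
     (\<forall>k\<ge>1. below_sup_support M N k \<longrightarrow>
        fgm_valid (Suc k) \<theta> \<and>
        (\<forall>(t::real) (x::nat \<Rightarrow> real).
           measure M {\<omega>\<in>space M. real (N \<omega>) \<le> t \<and> (\<forall>j\<in>{1..k}. X j \<omega> \<le> x j)}
           = fgm_copula (Suc k) \<theta> (\<lambda>m. if m = 0 then FN t else FX (x m))))"

definition agg :: "('a \<Rightarrow> nat) \<Rightarrow> (nat \<Rightarrow> 'a \<Rightarrow> real) \<Rightarrow> 'a \<Rightarrow> real" where
  "agg N X \<omega> = (\<Sum>j\<in>{1..N \<omega>}. X j \<omega>)"

definition fgm_comonotone :: "'a measure \<Rightarrow> ('a \<Rightarrow> nat) \<Rightarrow> (nat set \<Rightarrow> real) \<Rightarrow> bool" where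
  "fgm_comonotone M N \<theta> \<longleftrightarrow>
     (\<forall>k\<ge>1. below_sup_support M N k \<longrightarrow>
        fgm_pmf (Suc k) \<theta> (\<lambda>_. 0) = 1/2 \<and> fgm_pmf (Suc k) \<theta> (\<lambda>_. 1) = 1/2)"

end

theory Submission
  imports Defs
begin

text \<open>Conditionally on the associated Bernoulli vector \<open>I\<close>, an FGM-distributed vector
  \<open>(N, X\<^sub>1, \<dots>, X\<^sub>k)\<close> has the law of the vector whose \<open>m\<close>-th coordinate is the minimum
  (\<open>I\<^sub>m = 0\<close>) or the maximum (\<open>I\<^sub>m = 1\<close>) of two independent copies of the corresponding
  marginal. Hence, for increasing convex \<open>\<phi>\<close>, the expectation of \<open>\<phi>(S\<^sub>k)\<close>, where \<open>S\<^sub>k\<close> is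
  the sum of the first \<open>min k N\<close> claims, equals \<open>E h(I)\<close> for a function \<open>h\<close> on the cube
  \<open>{0,1}\<^sup>k\<^sup>+\<^sup>1\<close>; this \<open>h\<close> is supermodular because \<open>S\<^sub>k\<close> is supermodular in
  \<open>(N, X\<^sub>1, \<dots>, X\<^sub>k)\<close> and \<open>\<phi>\<close> is increasing and convex. Among the laws on the cube with
  Bernoulli(1/2) margins, the comonotonic one, which sits on the two extreme vertices, maximises the
  mean of every supermodular function. Monotone convergence in \<open>k\<close> concludes.\<close>

section \<open>The Boolean cube and the FGM weights\<close>

definition cube01 :: "nat \<Rightarrow> (nat \<Rightarrow> nat) set" where
  "cube01 d = PiE {..<d} (\<lambda>_. {0, 1})"

definition cube_zero :: "nat \<Rightarrow> nat \<Rightarrow> nat" where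
  "cube_zero d = restrict (\<lambda>_. 0) {..<d}"

definition cube_one :: "nat \<Rightarrow> nat \<Rightarrow> nat" where
  "cube_one d = restrict (\<lambda>_. 1) {..<d}"

lemma finite_cube01 [simp]: "finite (cube01 d)"
  unfolding cube01_def by (intro finite_PiE) auto

lemma cube01_cases: "i \<in> cube01 d \<Longrightarrow> m < d \<Longrightarrow> i m = 0 \<or> i m = 1"
  by (auto simp: cube01_def PiE_iff)

lemma cube_zero_in_cube01 [simp]: "cube_zero d \<in> cube01 d"
  by (simp add: cube_zero_def cube01_def)

lemma cube_one_in_cube01 [simp]: "cube_one d \<in> cube01 d"
  by (simp add: cube_one_def cube01_def)

lemma cube01_ne_empty [simp]: "cube01 d \<noteq> {}"
  using cube_zero_in_cube01 by blast

lemma cube_zero_neq_cube_one: "0 < d \<Longrightarrow> cube_zero d \<noteq> cube_one d"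
  by (metis cube_one_def cube_zero_def lessThan_iff restrict_apply' zero_neq_one)

lemma fun_upd_one_in_cube01: "i \<in> cube01 d \<Longrightarrow> j < d \<Longrightarrow> i(j := 1) \<in> cube01 d"
  by (auto simp: cube01_def PiE_iff extensional_def)

lemma cube01_le_cube_one: "i \<in> cube01 d \<Longrightarrow> m < d \<Longrightarrow> i m \<le> cube_one d m"
  using cube01_cases[of i d m] by (auto simp: cube_one_def)

lemma sum_cube01_prod:
  fixes f :: "nat \<Rightarrow> nat \<Rightarrow> 'a::comm_semiring_1"
  shows "(\<Sum>i\<in>cube01 d. \<Prod>m<d. f m (i m)) = (\<Prod>m<d. f m 0 + f m 1)"
  unfolding cube01_def by (subst prod_sum_PiE[symmetric]) auto

lemma sum_cube01_sign_prod:
  fixes f :: "nat \<Rightarrow> nat \<Rightarrow> 'a::comm_ring_1"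
  assumes "J \<subseteq> {..<d}"
  shows "(\<Sum>i\<in>cube01 d. (-1) ^ (\<Sum>j\<in>J. i j) * (\<Prod>m<d. f m (i m)))
       = (\<Prod>m<d. if m \<in> J then f m 0 - f m 1 else f m 0 + f m 1)"
proof -
  have sign: "(-1) ^ (\<Sum>j\<in>J. i j) = (\<Prod>m<d. if m \<in> J then (-1 :: 'a) ^ i m else 1)" for i
  proof -
    have "(\<Prod>m<d. if m \<in> J then (-1 :: 'a) ^ i m else 1) = (\<Prod>m\<in>{..<d} \<inter> J. (-1) ^ i m)"
      by (rule prod.inter_restrict[symmetric]) auto
    also have "{..<d} \<inter> J = J" using assms by auto
    finally show ?thesis by (simp add: power_sum)
  qed
  have "(\<Sum>i\<in>cube01 d. (-1) ^ (\<Sum>j\<in>J. i j) * (\<Prod>m<d. f m (i m)))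
      = (\<Sum>i\<in>cube01 d. \<Prod>m<d. (if m \<in> J then (-1) ^ i m else 1) * f m (i m))"
    by (simp add: sign prod.distrib)
  also have "\<dots> = (\<Prod>m<d. if m \<in> J then f m 0 - f m 1 else f m 0 + f m 1)"
    by (subst sum_cube01_prod) (auto intro: prod.cong)
  finally show ?thesis .
qed

lemma fgm_index_subset: "J \<in> fgm_index d \<Longrightarrow> J \<subseteq> {..<d}"
  by (simp add: fgm_index_def)

lemma finite_fgm_index [simp]: "finite (fgm_index d)"
  unfolding fgm_index_def by (rule finite_subset[of _ "Pow {..<d}"]) auto

lemma fgm_index_obtain_other:
  assumes "J \<in> fgm_index d"
  obtains a where "a \<in> J" "a \<noteq> m"
proof -
  have "2 \<le> card J" using assms by (simp add: fgm_index_def)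
  moreover have "card J \<le> 1" if "J \<subseteq> {m}"
    using card_mono[OF _ that] by simp
  ultimately have "\<not> J \<subseteq> {m}" by linarith
  then show ?thesis using that by blast
qed

lemma sum_fgm_pmf_prod:
  fixes f :: "nat \<Rightarrow> nat \<Rightarrow> real"
  shows "(\<Sum>i\<in>cube01 d. fgm_pmf d \<theta> i * (\<Prod>m<d. f m (i m)))
       = (1/2) ^ d * ((\<Prod>m<d. f m 0 + f m 1)
           + (\<Sum>J\<in>fgm_index d. \<theta> J * (\<Prod>m<d. if m \<in> J then f m 0 - f m 1 else f m 0 + f m 1)))"
proof -
  have "(\<Sum>i\<in>cube01 d. fgm_pmf d \<theta> i * (\<Prod>m<d. f m (i m)))
      = (1/2) ^ d * ((\<Sum>i\<in>cube01 d. \<Prod>m<d. f m (i m)) + (\<Sum>J\<in>fgm_index d. \<theta> J *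
          (\<Sum>i\<in>cube01 d. (-1) ^ (\<Sum>j\<in>J. i j) * (\<Prod>m<d. f m (i m)))))"
    unfolding fgm_pmf_def
    by (simp add: algebra_simps sum.distrib sum_distrib_left sum_distrib_right sum.swap[of _ "cube01 d"])
  then show ?thesis
    by (simp add: sum_cube01_prod sum_cube01_sign_prod fgm_index_subset cong: sum.cong)
qed

lemma prod_if_eq_zero:
  fixes f g :: "nat \<Rightarrow> 'a::comm_semiring_1"
  assumes "a \<in> J" "J \<subseteq> {..<d}" "f a = 0"
  shows "(\<Prod>m<d. if m \<in> J then f m else g m) = 0"
  using assms by (intro prod_zero) (auto intro!: bexI[of _ a])

lemma sum_fgm_pmf_prod_balanced:
  fixes f :: "nat \<Rightarrow> nat \<Rightarrow> real"
  assumes "\<And>J. J \<in> fgm_index d \<Longrightarrow> \<exists>a\<in>J. f a 0 = f a 1"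
  shows "(\<Sum>i\<in>cube01 d. fgm_pmf d \<theta> i * (\<Prod>m<d. f m (i m))) = (1/2) ^ d * (\<Prod>m<d. f m 0 + f m 1)"
proof -
  have zero: "(\<Prod>m<d. if m \<in> J then f m 0 - f m 1 else f m 0 + f m 1) = 0"
    if J: "J \<in> fgm_index d" for J
  proof -
    obtain a where "a \<in> J" "f a 0 = f a 1" using assms[OF J] by blast
    then show ?thesis by (intro prod_if_eq_zero[of a] fgm_index_subset[OF J]) simp_all
  qed
  have "(\<Sum>J\<in>fgm_index d. \<theta> J * (\<Prod>m<d. if m \<in> J then f m 0 - f m 1 else f m 0 + f m 1)) = 0"
    by (intro sum.neutral ballI) (simp only: zero mult_zero_right)
  then show ?thesis by (simp only: sum_fgm_pmf_prod add_0_right)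
qed

lemma sum_fgm_pmf: "(\<Sum>i\<in>cube01 d. fgm_pmf d \<theta> i) = 1"
proof -
  have "\<exists>a\<in>J. True" if "J \<in> fgm_index d" for J
    using fgm_index_obtain_other[OF that] by blast
  then show ?thesis
    using sum_fgm_pmf_prod_balanced[of d "\<lambda>_ _. 1" \<theta>] by (simp add: power_one_over)
qed

lemma sum_fgm_pmf_marginal:
  assumes "m0 < d"
  shows "(\<Sum>i\<in>cube01 d. fgm_pmf d \<theta> i * real (i m0)) = 1/2"
proof -
  define f :: "nat \<Rightarrow> nat \<Rightarrow> real" where "f m y = (if m = m0 then real y else 1)" for m y
  have balanced: "\<exists>a\<in>J. f a 0 = f a 1" if J: "J \<in> fgm_index d" for J
  proof -
    obtain a where "a \<in> J" "a \<noteq> m0" using fgm_index_obtain_other[OF J] .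
    then show ?thesis by (auto simp: f_def)
  qed
  have "(\<Prod>m<d. f m (i m)) = real (i m0)" for i
    using assms by (simp add: f_def prod.delta)
  then have "(\<Sum>i\<in>cube01 d. fgm_pmf d \<theta> i * real (i m0)) = (1/2) ^ d * (\<Prod>m<d. f m 0 + f m 1)"
    using sum_fgm_pmf_prod_balanced[of d f \<theta>] balanced by simp
  also have "(\<Prod>m<d. f m 0 + f m 1) = (\<Prod>m\<in>{..<d} - {m0}. 2)"
    using assms by (subst prod.remove[of _ m0]) (auto simp: f_def intro!: prod.cong)
  also have "(1/2) ^ d * \<dots> = 1/2"
    using assms by (cases d) (auto simp: power_one_over)
  finally show ?thesis .
qed

lemma fgm_pmf_nonneg:
  assumes "fgm_valid d \<theta>" "i \<in> cube01 d"
  shows "0 \<le> fgm_pmf d \<theta> i"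
proof -
  define \<epsilon> where "\<epsilon> m = (-1::real) ^ i m" for m
  have "\<forall>m<d. \<epsilon> m = 1 \<or> \<epsilon> m = -1"
    using cube01_cases[OF assms(2)] by (force simp: \<epsilon>_def)
  then have "0 \<le> 1 + (\<Sum>J\<in>fgm_index d. \<theta> J * (\<Prod>j\<in>J. \<epsilon> j))"
    using assms(1) by (simp add: fgm_valid_def)
  also have "(\<Sum>J\<in>fgm_index d. \<theta> J * (\<Prod>j\<in>J. \<epsilon> j)) = (\<Sum>J\<in>fgm_index d. (-1) ^ (\<Sum>j\<in>J. i j) * \<theta> J)"
    by (simp add: \<epsilon>_def power_sum mult.commute)
  finally show ?thesis unfolding fgm_pmf_def by simp
qed

lemma fgm_pmf_cong:
  assumes "\<And>j. j < d \<Longrightarrow> i j = i' j"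
  shows "fgm_pmf d \<theta> i = fgm_pmf d \<theta> i'"
proof -
  have "(\<Sum>j\<in>J. i j) = (\<Sum>j\<in>J. i' j)" if "J \<in> fgm_index d" for J
    using fgm_index_subset[OF that] assms by (intro sum.cong) auto
  then show ?thesis unfolding fgm_pmf_def by (simp cong: sum.cong)
qed

lemma fgm_comonotoneD:
  assumes "fgm_comonotone M N \<theta>" "1 \<le> K" "below_sup_support M N K"
  shows "fgm_pmf (Suc K) \<theta> (cube_zero (Suc K)) = 1/2" "fgm_pmf (Suc K) \<theta> (cube_one (Suc K)) = 1/2"
proof -
  have "fgm_pmf (Suc K) \<theta> (cube_zero (Suc K)) = fgm_pmf (Suc K) \<theta> (\<lambda>_. 0)"
    "fgm_pmf (Suc K) \<theta> (cube_one (Suc K)) = fgm_pmf (Suc K) \<theta> (\<lambda>_. 1)"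
    by (auto intro: fgm_pmf_cong simp: cube_zero_def cube_one_def)
  then show "fgm_pmf (Suc K) \<theta> (cube_zero (Suc K)) = 1/2" "fgm_pmf (Suc K) \<theta> (cube_one (Suc K)) = 1/2"
    using assms unfolding fgm_comonotone_def by auto
qed

lemma fgm_pmf_comonotone_eq_0:
  assumes "0 < d" "fgm_valid d \<theta>"
    and "fgm_pmf d \<theta> (cube_zero d) = 1/2" "fgm_pmf d \<theta> (cube_one d) = 1/2"
    and "i \<in> cube01 d - {cube_zero d, cube_one d}"
  shows "fgm_pmf d \<theta> i = 0"
proof -
  have "(\<Sum>i\<in>cube01 d. fgm_pmf d \<theta> i)
      = (\<Sum>i\<in>{cube_zero d, cube_one d}. fgm_pmf d \<theta> i)
        + (\<Sum>i\<in>cube01 d - {cube_zero d, cube_one d}. fgm_pmf d \<theta> i)"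
    by (subst sum.subset_diff[of "{cube_zero d, cube_one d}"]) auto
  then have "(\<Sum>i\<in>cube01 d - {cube_zero d, cube_one d}. fgm_pmf d \<theta> i) = 0"
    using sum_fgm_pmf[of d \<theta>] assms(3,4) cube_zero_neq_cube_one[OF assms(1)] by simp
  then show ?thesis
    using sum_nonneg_eq_0_iff[of "cube01 d - {cube_zero d, cube_one d}" "fgm_pmf d \<theta>"]
      fgm_pmf_nonneg[OF assms(2)] assms(5)
    by auto
qed

lemma sum_fgm_pmf_comonotone:
  fixes h :: "(nat \<Rightarrow> nat) \<Rightarrow> ennreal"
  assumes "0 < d" "fgm_valid d \<theta>"
    and zero: "fgm_pmf d \<theta> (cube_zero d) = 1/2" and one: "fgm_pmf d \<theta> (cube_one d) = 1/2"
  shows "(\<Sum>i\<in>cube01 d. ennreal (fgm_pmf d \<theta> i) * h i)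
       = ennreal (1/2) * (h (cube_zero d) + h (cube_one d))"
proof -
  have "(\<Sum>i\<in>cube01 d. ennreal (fgm_pmf d \<theta> i) * h i)
      = (\<Sum>i\<in>{cube_zero d, cube_one d}. ennreal (fgm_pmf d \<theta> i) * h i)"
    using fgm_pmf_comonotone_eq_0[OF assms] by (intro sum.mono_neutral_right) auto
  then show ?thesis
    using cube_zero_neq_cube_one[OF assms(1)] by (simp add: zero one distrib_left)
qed

text \<open>Distribution function of the minimum (\<open>b = 0\<close>) or the maximum (\<open>b = 1\<close>) of two
  independent copies of a variable with distribution function value \<open>u\<close>.\<close>
definition minmax_cdf :: "nat \<Rightarrow> real \<Rightarrow> real" where
  "minmax_cdf b u = (if b = 0 then 2 * u - u\<^sup>2 else u\<^sup>2)"

lemma minmax_cdf_nonneg: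
  assumes "0 \<le> u" "u \<le> 1"
  shows "0 \<le> minmax_cdf b u"
proof -
  have "u * u \<le> u" using mult_right_mono[of u 1 u] assms by simp
  then show ?thesis using assms by (auto simp: minmax_cdf_def power2_eq_square)
qed

lemma fgm_copula_eq_mixture:
  "fgm_copula d \<theta> u = (\<Sum>i\<in>cube01 d. fgm_pmf d \<theta> i * (\<Prod>m<d. minmax_cdf (i m) (u m)))"
proof -
  have total: "(\<Prod>m<d. minmax_cdf 0 (u m) + minmax_cdf 1 (u m)) = 2 ^ d * (\<Prod>m<d. u m)"
    by (simp add: minmax_cdf_def prod.distrib)
  have factor: "(\<Prod>m<d. if m \<in> J then minmax_cdf 0 (u m) - minmax_cdf 1 (u m)
                                   else minmax_cdf 0 (u m) + minmax_cdf 1 (u m))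
      = 2 ^ d * ((\<Prod>m<d. u m) * (\<Prod>j\<in>J. 1 - u j))" if "J \<in> fgm_index d" for J
  proof -
    have "(\<Prod>m<d. if m \<in> J then 1 - u m else 1) = (\<Prod>j\<in>J. 1 - u j)"
      using prod.inter_restrict[of "{..<d}" "\<lambda>j. 1 - u j" J] fgm_index_subset[OF that]
      by (simp add: Int_absorb1)
    moreover have "(\<Prod>m<d. if m \<in> J then minmax_cdf 0 (u m) - minmax_cdf 1 (u m)
                                   else minmax_cdf 0 (u m) + minmax_cdf 1 (u m))
        = (\<Prod>m<d. 2 * (u m * (if m \<in> J then 1 - u m else 1)))"
      by (intro prod.cong) (auto simp: minmax_cdf_def power2_eq_square algebra_simps)
    ultimately show ?thesis by (simp add: prod.distrib)
  qed
  have "(\<Sum>i\<in>cube01 d. fgm_pmf d \<theta> i * (\<Prod>m<d. minmax_cdf (i m) (u m)))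
      = (1/2) ^ d * (2 ^ d * (\<Prod>m<d. u m)
          + (\<Sum>J\<in>fgm_index d. \<theta> J * (2 ^ d * ((\<Prod>m<d. u m) * (\<Prod>j\<in>J. 1 - u j)))))"
    by (simp add: sum_fgm_pmf_prod[of d \<theta> "\<lambda>m y. minmax_cdf y (u m)"] total factor
        del: One_nat_def cong: sum.cong)
  also have "\<dots> = (1/2) ^ d * 2 ^ d * ((\<Prod>m<d. u m) * (1 + (\<Sum>J\<in>fgm_index d. \<theta> J * (\<Prod>j\<in>J. 1 - u j))))"
    by (simp add: sum_distrib_left algebra_simps)
  also have "\<dots> = fgm_copula d \<theta> u"
    by (simp add: fgm_copula_def flip: power_mult_distrib)
  finally show ?thesis by (rule sym)
qed

section \<open>Supermodular functions on the cube\<close>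

definition cube_prefix :: "nat \<Rightarrow> (nat \<Rightarrow> nat) \<Rightarrow> nat \<Rightarrow> nat \<Rightarrow> nat" where
  "cube_prefix d i j = restrict (\<lambda>m. if m < j then i m else 0) {..<d}"

text \<open>On the cube, increasing differences in each coordinate is equivalent to supermodularity.\<close>
definition supermodular_on_cube01 :: "nat \<Rightarrow> ((nat \<Rightarrow> nat) \<Rightarrow> 'b::{plus, ord}) \<Rightarrow> bool" where
  "supermodular_on_cube01 d h \<longleftrightarrow>
     (\<forall>x\<in>cube01 d. \<forall>y\<in>cube01 d. \<forall>j<d. (\<forall>m<d. x m \<le> y m) \<longrightarrow> x j = 0 \<longrightarrow> y j = 0 \<longrightarrow>
        h (x(j := 1)) + h y \<le> h (y(j := 1)) + h x)"

lemma cube_prefix_in_cube01: "i \<in> cube01 d \<Longrightarrow> cube_prefix d i j \<in> cube01 d"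
  by (auto simp: cube_prefix_def cube01_def PiE_iff)

lemma cube_prefix_0 [simp]: "cube_prefix d i 0 = cube_zero d"
  by (simp add: cube_prefix_def cube_zero_def)

lemma cube_prefix_full: "i \<in> cube01 d \<Longrightarrow> cube_prefix d i d = i"
  by (auto simp: cube_prefix_def cube01_def PiE_iff extensional_def restrict_def)

lemma cube_prefix_Suc: "j < d \<Longrightarrow> cube_prefix d i (Suc j) = (cube_prefix d i j)(j := i j)"
  by (auto simp: cube_prefix_def restrict_def)

lemma cube_prefix_at: "j < d \<Longrightarrow> cube_prefix d i j j = 0"
  by (simp add: cube_prefix_def)

lemma supermodular_on_cube01D:
  assumes "supermodular_on_cube01 d h" "x \<in> cube01 d" "y \<in> cube01 d" "j < d"
    and "\<And>m. m < d \<Longrightarrow> x m \<le> y m" "x j = 0" "y j = 0"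
  shows "h (x(j := 1)) + h y \<le> h (y(j := 1)) + h x"
  using assms unfolding supermodular_on_cube01_def by blast

lemma supermodular_prefix_increment_le:
  fixes h :: "(nat \<Rightarrow> nat) \<Rightarrow> real"
  assumes h: "supermodular_on_cube01 d h" and i: "i \<in> cube01 d" and j: "j < d"
  shows "h (cube_prefix d i (Suc j)) - h (cube_prefix d i j)
       \<le> real (i j) * (h (cube_prefix d (cube_one d) (Suc j)) - h (cube_prefix d (cube_one d) j))"
proof (cases "i j = 0")
  case True
  then show ?thesis
    using cube_prefix_Suc[OF j, of i] cube_prefix_at[OF j, of i] by (simp add: fun_upd_idem)
next
  case False
  then have "i j = 1" using cube01_cases[OF i j] by simp
  moreover have "cube_one d j = 1" using j by (simp add: cube_one_def)
  moreover have "h ((cube_prefix d i j)(j := 1)) + h (cube_prefix d (cube_one d) j)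
      \<le> h ((cube_prefix d (cube_one d) j)(j := 1)) + h (cube_prefix d i j)"
    using cube01_le_cube_one[OF i]
    by (intro supermodular_on_cube01D[OF h] cube_prefix_in_cube01 cube_one_in_cube01 i j
        cube_prefix_at[OF j]) (simp add: cube_prefix_def)
  ultimately show ?thesis by (simp add: cube_prefix_Suc[OF j])
qed

text \<open>Going from the bottom vertex to \<open>i\<close> one coordinate at a time, supermodularity bounds
  each step by the corresponding step on the path to the top vertex; averaging against \<open>p\<close>,
  whose margins are \<open>1/2\<close>, leaves half of the total increment.\<close>
lemma sum_supermodular_le_extremes:
  fixes p h :: "(nat \<Rightarrow> nat) \<Rightarrow> real"
  assumes p_nonneg: "\<And>i. i \<in> cube01 d \<Longrightarrow> 0 \<le> p i"
    and p_sum: "(\<Sum>i\<in>cube01 d. p i) = 1"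
    and p_marginal: "\<And>m. m < d \<Longrightarrow> (\<Sum>i\<in>cube01 d. p i * real (i m)) = 1/2"
    and h: "supermodular_on_cube01 d h"
  shows "(\<Sum>i\<in>cube01 d. p i * h i) \<le> (h (cube_zero d) + h (cube_one d)) / 2"
proof -
  define D where "D j = h (cube_prefix d (cube_one d) (Suc j)) - h (cube_prefix d (cube_one d) j)" for j
  have path: "h i \<le> h (cube_zero d) + (\<Sum>j<d. real (i j) * D j)" if i: "i \<in> cube01 d" for i
  proof -
    have "h i - h (cube_zero d) = (\<Sum>j<d. h (cube_prefix d i (Suc j)) - h (cube_prefix d i j))"
      by (subst sum_lessThan_telescope) (simp add: cube_prefix_full[OF i])
    also have "\<dots> \<le> (\<Sum>j<d. real (i j) * D j)"
      unfolding D_def by (intro sum_mono supermodular_prefix_increment_le[OF h i]) simp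
    finally show ?thesis by simp
  qed
  have "(\<Sum>i\<in>cube01 d. p i * h i) \<le> (\<Sum>i\<in>cube01 d. p i * (h (cube_zero d) + (\<Sum>j<d. real (i j) * D j)))"
    by (intro sum_mono mult_left_mono path p_nonneg)
  also have "\<dots> = (\<Sum>i\<in>cube01 d. p i) * h (cube_zero d) + (\<Sum>j<d. (\<Sum>i\<in>cube01 d. p i * real (i j)) * D j)"
    by (simp add: algebra_simps sum.distrib sum_distrib_left sum_distrib_right sum.swap[of _ "cube01 d"])
  also have "\<dots> = h (cube_zero d) + (\<Sum>j<d. D j) / 2"
    by (simp add: p_sum p_marginal sum_divide_distrib)
  also have "(\<Sum>j<d. D j) = h (cube_one d) - h (cube_zero d)"
    unfolding D_def by (subst sum_lessThan_telescope) (simp add: cube_prefix_full)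
  also have "h (cube_zero d) + (h (cube_one d) - h (cube_zero d)) / 2
      = (h (cube_zero d) + h (cube_one d)) / 2"
    by (simp add: field_simps)
  finally show ?thesis .
qed

lemma supermodular_on_cube01_enn2real:
  fixes h :: "(nat \<Rightarrow> nat) \<Rightarrow> ennreal"
  assumes h: "supermodular_on_cube01 d h" and fin: "\<And>i. i \<in> cube01 d \<Longrightarrow> h i \<noteq> \<infinity>"
  shows "supermodular_on_cube01 d (\<lambda>i. enn2real (h i))"
  unfolding supermodular_on_cube01_def
proof (intro ballI allI impI)
  fix x y j assume x: "x \<in> cube01 d" and y: "y \<in> cube01 d" and j: "j < d"
    and "\<forall>m<d. x m \<le> y m" "x j = 0" "y j = 0"
  then have "h (x(j := 1)) + h y \<le> h (y(j := 1)) + h x"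
    using h unfolding supermodular_on_cube01_def by blast
  moreover have "h (x(j := 1)) < \<infinity>" "h (y(j := 1)) < \<infinity>" "h x < \<infinity>" "h y < \<infinity>"
    using fin fun_upd_one_in_cube01[OF x j] fun_upd_one_in_cube01[OF y j] x y
    by (simp_all add: less_top)
  ultimately have "enn2real (h (x(j := 1)) + h y) \<le> enn2real (h (y(j := 1)) + h x)"
    by (intro enn2real_mono) simp_all
  with \<open>h (x(j := 1)) < \<infinity>\<close> \<open>h (y(j := 1)) < \<infinity>\<close> \<open>h x < \<infinity>\<close> \<open>h y < \<infinity>\<close>
  show "enn2real (h (x(j := 1))) + enn2real (h y) \<le> enn2real (h (y(j := 1))) + enn2real (h x)"
    by (simp add: enn2real_plus)
qed

lemma sum_fgm_pmf_le_comonotone: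
  fixes h :: "(nat \<Rightarrow> nat) \<Rightarrow> ennreal"
  assumes d: "0 < d" and valid: "fgm_valid d \<theta>" and valid': "fgm_valid d \<theta>'"
    and zero: "fgm_pmf d \<theta>' (cube_zero d) = 1/2" and one: "fgm_pmf d \<theta>' (cube_one d) = 1/2"
    and h: "supermodular_on_cube01 d h" and fin: "\<And>i. i \<in> cube01 d \<Longrightarrow> h i \<noteq> \<infinity>"
  shows "(\<Sum>i\<in>cube01 d. ennreal (fgm_pmf d \<theta> i) * h i) \<le> (\<Sum>i\<in>cube01 d. ennreal (fgm_pmf d \<theta>' i) * h i)"
proof -
  define hr where "hr = (\<lambda>i. enn2real (h i))"
  have hr_nonneg: "0 \<le> hr i" for i by (simp add: hr_def)
  have h_eq: "h i = ennreal (hr i)" if "i \<in> cube01 d" for i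
    using fin[OF that] by (simp add: hr_def ennreal_enn2real_if)
  have "(\<Sum>i\<in>cube01 d. ennreal (fgm_pmf d \<theta> i) * h i) = (\<Sum>i\<in>cube01 d. ennreal (fgm_pmf d \<theta> i * hr i))"
    by (intro sum.cong refl) (simp add: h_eq fgm_pmf_nonneg[OF valid] hr_nonneg ennreal_mult)
  also have "\<dots> = ennreal (\<Sum>i\<in>cube01 d. fgm_pmf d \<theta> i * hr i)"
    by (rule sum_ennreal) (simp add: fgm_pmf_nonneg[OF valid] hr_nonneg)
  also have "\<dots> \<le> ennreal ((hr (cube_zero d) + hr (cube_one d)) / 2)"
    using supermodular_on_cube01_enn2real[OF h fin]
    by (intro ennreal_leI sum_supermodular_le_extremes fgm_pmf_nonneg[OF valid] sum_fgm_pmf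
        sum_fgm_pmf_marginal) (simp_all add: hr_def)
  also have "\<dots> = ennreal (1/2 * hr (cube_zero d)) + ennreal (1/2 * hr (cube_one d))"
    by (simp add: hr_nonneg add_divide_distrib flip: ennreal_plus)
  also have "\<dots> = ennreal (1/2) * ennreal (hr (cube_zero d)) + ennreal (1/2) * ennreal (hr (cube_one d))"
    using ennreal_mult[of "1/2" "hr (cube_zero d)"] ennreal_mult[of "1/2" "hr (cube_one d)"] hr_nonneg
    by simp
  also have "\<dots> = ennreal (1/2) * (h (cube_zero d) + h (cube_one d))"
    by (simp add: h_eq distrib_left)
  also have "\<dots> = (\<Sum>i\<in>cube01 d. ennreal (fgm_pmf d \<theta>' i) * h i)"
    by (rule sum_fgm_pmf_comonotone[OF d valid' zero one, symmetric])
  finally show ?thesis .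
qed

section \<open>Order-statistic representation of FGM laws\<close>

definition minmax :: "nat \<Rightarrow> real \<times> real \<Rightarrow> real" where
  "minmax b w = (if b = 0 then min (fst w) (snd w) else max (fst w) (snd w))"

lemma minmax_measurable [measurable]: "minmax b \<in> borel_measurable (borel \<Otimes>\<^sub>M borel)"
  unfolding minmax_def by measurable

lemma minmax_0_le: "minmax 0 w \<le> minmax b w"
  by (auto simp: minmax_def min_def max_def)

lemma emeasure_pair_minmax_le:
  assumes "prob_space \<nu>" and sets_\<nu>: "sets \<nu> = sets borel"
  shows "emeasure (\<nu> \<Otimes>\<^sub>M \<nu>) {w. minmax b w \<le> x} = ennreal (minmax_cdf b (measure \<nu> {..x}))"
proof -
  interpret prob_space \<nu> by fact
  interpret \<nu>\<nu>: prob_space "\<nu> \<Otimes>\<^sub>M \<nu>" by (intro prob_space_pair assms(1))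
  have [measurable]: "{..x} \<in> sets \<nu>" "{x<..} \<in> sets \<nu>" using sets_\<nu> by auto
  have space_\<nu>: "space \<nu> = UNIV" using sets_eq_imp_space_eq[OF sets_\<nu>] by simp
  show ?thesis
  proof (cases "b = 0")
    case True
    have "{x<..} = space \<nu> - {..x}" using space_\<nu> by auto
    then have compl: "measure \<nu> {x<..} = 1 - measure \<nu> {..x}" by (simp add: prob_compl)
    have "{w. minmax b w \<le> x} = space (\<nu> \<Otimes>\<^sub>M \<nu>) - {x<..} \<times> {x<..}"
      using True by (auto simp: minmax_def space_pair_measure space_\<nu> min_def)
    then have min_le: "measure (\<nu> \<Otimes>\<^sub>M \<nu>) {w. minmax b w \<le> x}
        = 1 - measure (\<nu> \<Otimes>\<^sub>M \<nu>) ({x<..} \<times> {x<..})"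
      by (simp add: \<nu>\<nu>.prob_compl)
    have "measure (\<nu> \<Otimes>\<^sub>M \<nu>) ({x<..} \<times> {x<..}) = measure \<nu> {x<..} * measure \<nu> {x<..}"
      by (simp add: measure_def emeasure_pair_measure_Times enn2real_mult)
    then have "measure (\<nu> \<Otimes>\<^sub>M \<nu>) {w. minmax b w \<le> x} = minmax_cdf b (measure \<nu> {..x})"
      unfolding min_le compl using True by (simp add: minmax_cdf_def power2_eq_square algebra_simps)
    then show ?thesis by (simp add: \<nu>\<nu>.emeasure_eq_measure)
  next
    case False
    then have "{w. minmax b w \<le> x} = {..x} \<times> {..x}" by (auto simp: minmax_def)
    then show ?thesis
      using False by (simp add: emeasure_pair_measure_Times minmax_cdf_def emeasure_eq_measure
          power2_eq_square ennreal_mult)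
  qed
qed

definition borel_vec :: "nat \<Rightarrow> (nat \<Rightarrow> real) measure" where
  "borel_vec d = PiM {..<d} (\<lambda>_. borel)"

definition pair_copies :: "nat \<Rightarrow> (nat \<Rightarrow> real measure) \<Rightarrow> (nat \<Rightarrow> real \<times> real) measure" where
  "pair_copies d \<nu>s = PiM {..<d} (\<lambda>j. \<nu>s j \<Otimes>\<^sub>M \<nu>s j)"

definition minmax_vec :: "nat \<Rightarrow> (nat \<Rightarrow> nat) \<Rightarrow> (nat \<Rightarrow> real \<times> real) \<Rightarrow> nat \<Rightarrow> real" where
  "minmax_vec d i w = (\<lambda>j\<in>{..<d}. minmax (i j) (w j))"

definition lower_box :: "nat \<Rightarrow> (nat \<Rightarrow> real) \<Rightarrow> (nat \<Rightarrow> real) set" where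
  "lower_box d a = PiE {..<d} (\<lambda>j. {..a j})"

lemma space_borel_vec: "space (borel_vec d) = PiE {..<d} (\<lambda>_. UNIV)"
  by (simp add: borel_vec_def space_PiM)

lemma lower_box_in_sets [measurable]: "lower_box d a \<in> sets (borel_vec d)"
  unfolding lower_box_def borel_vec_def by (intro sets_PiM_I_finite) auto

lemma vimage_lower_box:
  assumes "V \<in> measurable M (borel_vec d)"
  shows "V -` lower_box d a \<inter> space M = {\<omega>\<in>space M. \<forall>j<d. V \<omega> j \<le> a j}"
  using measurable_space[OF assms] by (auto simp: lower_box_def space_borel_vec PiE_iff)

lemma range_lower_box:
  "range (lower_box d) = {{f \<in> PiE {..<d} (\<lambda>_. UNIV). \<forall>i\<in>{..<d}. f i \<in> A i}
     | A. A \<in> Pi {..<d} (\<lambda>_. range atMost)}" (is "_ = ?P")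
proof
  show "?P \<subseteq> range (lower_box d)"
  proof
    fix S assume "S \<in> ?P"
    then obtain A where A: "A \<in> Pi {..<d} (\<lambda>_. range atMost)"
      and S: "S = {f \<in> PiE {..<d} (\<lambda>_. UNIV). \<forall>i\<in>{..<d}. f i \<in> A i}"
      by auto
    define a where "a j = (SOME x. A j = {..x})" for j
    have "A j = {..a j}" if "j < d" for j
      unfolding a_def by (rule someI_ex) (use A that in auto)
    then have "S = lower_box d a" unfolding S lower_box_def by (auto simp: PiE_iff extensional_def)
    then show "S \<in> range (lower_box d)" by auto
  qed
  show "range (lower_box d) \<subseteq> ?P"
  proof
    fix S assume "S \<in> range (lower_box d)"
    then obtain a where S: "S = lower_box d a" by auto
    have "S = {f \<in> PiE {..<d} (\<lambda>_. UNIV). \<forall>i\<in>{..<d}. f i \<in> {..a i}}"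
      unfolding S lower_box_def by (auto simp: PiE_iff extensional_def)
    then show "S \<in> ?P" by (intro CollectI exI[of _ "\<lambda>i. {..a i}"]) auto
  qed
qed

lemma sets_borel_vec_lower_boxes:
  "sets (borel_vec d) = sigma_sets (space (borel_vec d)) (range (lower_box d))"
proof -
  have "sets (\<Pi>\<^sub>M i\<in>{..<d}. sigma UNIV (range atMost))
      = sets (sigma (\<Pi>\<^sub>E i\<in>{..<d}. (UNIV::real set))
          {{f\<in>(\<Pi>\<^sub>E i\<in>{..<d}. UNIV). \<forall>i\<in>j. f i \<in> A i} | A j. j \<in> {{..<d}} \<and> A \<in> Pi j (\<lambda>_. range atMost)})"
  proof (rule sets_PiM_sigma)
    show "\<exists>S\<subseteq>range atMost. countable S \<and> (UNIV::real set) = \<Union>S" for i :: nat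
      by (intro exI[of _ "range (\<lambda>n::nat. {..real n})"]) (auto intro: real_arch_simple)
  qed auto
  moreover have "range (lower_box d) \<subseteq> Pow (\<Pi>\<^sub>E i\<in>{..<d}. (UNIV::real set))"
    by (auto simp: lower_box_def)
  ultimately show ?thesis
    by (simp add: borel_vec_def space_PiM borel_eq_atMost[symmetric] range_lower_box)
qed

lemma measure_eqI_lower_boxes:
  assumes sets_P: "sets P = sets (borel_vec d)" and sets_Q: "sets Q = sets (borel_vec d)"
    and "finite_measure P"
    and eq: "\<And>a. emeasure P (lower_box d a) = emeasure Q (lower_box d a)"
  shows "P = Q"
proof (rule measure_eqI_generator_eq[where \<Omega> = "space (borel_vec d)" and E = "range (lower_box d)"
      and A = "\<lambda>n. lower_box d (\<lambda>_. real n)"])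
  show "Int_stable (range (lower_box d))"
  proof (rule Int_stableI_image)
    fix a b :: "nat \<Rightarrow> real"
    have "lower_box d a \<inter> lower_box d b = lower_box d (\<lambda>j. min (a j) (b j))"
      by (simp add: lower_box_def PiE_Int)
    then show "\<exists>c\<in>UNIV. lower_box d a \<inter> lower_box d b = lower_box d c" by blast
  qed
  show "range (lower_box d) \<subseteq> Pow (space (borel_vec d))"
    using sets.sets_into_space[OF lower_box_in_sets] by blast
  show "(\<Union>n. lower_box d (\<lambda>_. real n)) = space (borel_vec d)"
  proof (intro equalityI subsetI)
    fix x assume "x \<in> space (borel_vec d)"
    moreover obtain n where n: "(\<Sum>j<d. \<bar>x j\<bar>) \<le> real n" using real_arch_simple by blast
    moreover have "x j \<le> (\<Sum>j<d. \<bar>x j\<bar>)" if "j < d" for j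
      using member_le_sum[of j "{..<d}" "\<lambda>j. \<bar>x j\<bar>"] that by simp
    ultimately have "x \<in> lower_box d (\<lambda>_. real n)"
      by (force simp: lower_box_def space_borel_vec PiE_iff)
    then show "x \<in> (\<Union>n. lower_box d (\<lambda>_. real n))" by blast
  qed (use sets.sets_into_space[OF lower_box_in_sets] in blast)
  show "emeasure P (lower_box d (\<lambda>_. real n)) \<noteq> \<infinity>" for n
    using \<open>finite_measure P\<close> by (simp add: finite_measure.emeasure_finite)
qed (use sets_P sets_Q sets_borel_vec_lower_boxes eq in auto)

locale borel_prob_family =
  fixes \<nu>s :: "nat \<Rightarrow> real measure"
  assumes prob_space_\<nu>s: "\<And>j. prob_space (\<nu>s j)"
    and sets_\<nu>s: "\<And>j. sets (\<nu>s j) = sets borel"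
begin

lemma sets_pair_copies: "sets (pair_copies d \<nu>s) = sets (PiM {..<d} (\<lambda>_. borel \<Otimes>\<^sub>M borel))"
  unfolding pair_copies_def by (intro sets_PiM_cong refl sets_pair_measure_cong sets_\<nu>s)

lemma space_pair_copies: "space (pair_copies d \<nu>s) = PiE {..<d} (\<lambda>_. UNIV)"
  using sets_eq_imp_space_eq[OF sets_pair_copies] by (simp add: space_PiM space_pair_measure)

lemma prob_space_pair_copies: "prob_space (pair_copies d \<nu>s)"
  unfolding pair_copies_def by (intro prob_space_PiM prob_space_pair prob_space_\<nu>s)

lemma measurable_minmax_vec: "minmax_vec d i \<in> measurable (pair_copies d \<nu>s) (borel_vec d)"
  unfolding measurable_cong_sets[OF sets_pair_copies refl] borel_vec_def minmax_vec_def by measurable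

lemma emeasure_distr_minmax_vec_lower_box:
  "emeasure (distr (pair_copies d \<nu>s) (borel_vec d) (minmax_vec d i)) (lower_box d a)
   = ennreal (\<Prod>j<d. minmax_cdf (i j) (measure (\<nu>s j) {..a j}))"
proof -
  interpret product_prob_space "\<lambda>j. \<nu>s j \<Otimes>\<^sub>M \<nu>s j"
    by (intro product_prob_spaceI prob_space_pair prob_space_\<nu>s)
  have vimage: "minmax_vec d i -` lower_box d a \<inter> space (pair_copies d \<nu>s)
      = PiE {..<d} (\<lambda>j. {w. minmax (i j) w \<le> a j})"
  proof (rule set_eqI)
    fix w
    have "minmax_vec d i w \<in> lower_box d a \<longleftrightarrow> (\<forall>j<d. minmax (i j) (w j) \<le> a j)"
      unfolding minmax_vec_def lower_box_def restrict_PiE_iff by auto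
    moreover have "w \<in> space (pair_copies d \<nu>s) \<longleftrightarrow> w \<in> extensional {..<d}"
      by (simp add: space_pair_copies PiE_iff)
    ultimately show "w \<in> minmax_vec d i -` lower_box d a \<inter> space (pair_copies d \<nu>s)
        \<longleftrightarrow> w \<in> PiE {..<d} (\<lambda>j. {w. minmax (i j) w \<le> a j})"
      by (auto simp: PiE_iff)
  qed
  have sets_minmax_le: "{w. minmax (i j) w \<le> a j} \<in> sets (\<nu>s j \<Otimes>\<^sub>M \<nu>s j)" for j
  proof -
    have "{w \<in> space (borel \<Otimes>\<^sub>M borel). minmax (i j) w \<le> a j} \<in> sets (borel \<Otimes>\<^sub>M borel)"
      by measurable
    then show ?thesis by (simp add: space_pair_measure sets_pair_measure_cong[OF sets_\<nu>s sets_\<nu>s])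
  qed
  have "emeasure (distr (pair_copies d \<nu>s) (borel_vec d) (minmax_vec d i)) (lower_box d a)
      = emeasure (pair_copies d \<nu>s) (PiE {..<d} (\<lambda>j. {w. minmax (i j) w \<le> a j}))"
    by (simp add: emeasure_distr[OF measurable_minmax_vec lower_box_in_sets] vimage)
  also have "\<dots> = (\<Prod>j<d. emeasure (\<nu>s j \<Otimes>\<^sub>M \<nu>s j) {w. minmax (i j) w \<le> a j})"
    unfolding pair_copies_def by (rule emeasure_PiM) (auto simp: sets_minmax_le)
  also have "\<dots> = (\<Prod>j<d. ennreal (minmax_cdf (i j) (measure (\<nu>s j) {..a j})))"
    by (intro prod.cong refl emeasure_pair_minmax_le prob_space_\<nu>s sets_\<nu>s)
  also have "\<dots> = ennreal (\<Prod>j<d. minmax_cdf (i j) (measure (\<nu>s j) {..a j}))"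
    by (intro prod_ennreal minmax_cdf_nonneg measure_nonneg prob_space.prob_le_1 prob_space_\<nu>s)
  finally show ?thesis .
qed

definition minmax_mixture :: "nat \<Rightarrow> ((nat \<Rightarrow> nat) \<Rightarrow> real) \<Rightarrow> (nat \<Rightarrow> real) measure" where
  "minmax_mixture d p = bind (density (count_space (cube01 d)) (\<lambda>i. ennreal (p i)))
     (\<lambda>i. distr (pair_copies d \<nu>s) (borel_vec d) (minmax_vec d i))"

lemma measurable_distr_minmax_vec:
  "(\<lambda>i. distr (pair_copies d \<nu>s) (borel_vec d) (minmax_vec d i))
     \<in> measurable (density (count_space (cube01 d)) f) (subprob_algebra (borel_vec d))"
  unfolding measurable_cong_sets[OF sets_density refl] measurable_count_space_eq1
  using prob_space.prob_space_distr[OF prob_space_pair_copies measurable_minmax_vec]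
  by (simp add: space_subprob_algebra prob_space_imp_subprob_space)

lemma sets_minmax_mixture: "sets (minmax_mixture d p) = sets (borel_vec d)"
  unfolding minmax_mixture_def
  by (rule sets_bind) simp_all

lemma nn_integral_minmax_mixture:
  assumes "g \<in> borel_measurable (borel_vec d)"
  shows "(\<integral>\<^sup>+y. g y \<partial>minmax_mixture d p)
       = (\<Sum>i\<in>cube01 d. ennreal (p i) * (\<integral>\<^sup>+w. g (minmax_vec d i w) \<partial>pair_copies d \<nu>s))"
  unfolding minmax_mixture_def
  by (simp add: nn_integral_bind[OF assms measurable_distr_minmax_vec] nn_integral_density
      nn_integral_count_space_finite nn_integral_distr measurable_minmax_vec assms)

lemma emeasure_minmax_mixture_lower_box:
  assumes "\<And>i. i \<in> cube01 d \<Longrightarrow> 0 \<le> p i"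
  shows "emeasure (minmax_mixture d p) (lower_box d a)
       = ennreal (\<Sum>i\<in>cube01 d. p i * (\<Prod>j<d. minmax_cdf (i j) (measure (\<nu>s j) {..a j})))"
proof -
  have nonneg: "0 \<le> (\<Prod>j<d. minmax_cdf (i j) (measure (\<nu>s j) {..a j}))" for i
    by (intro prod_nonneg minmax_cdf_nonneg measure_nonneg prob_space.prob_le_1 prob_space_\<nu>s)
  have "emeasure (minmax_mixture d p) (lower_box d a)
      = (\<Sum>i\<in>cube01 d. ennreal (p i)
          * emeasure (distr (pair_copies d \<nu>s) (borel_vec d) (minmax_vec d i)) (lower_box d a))"
    unfolding minmax_mixture_def
    by (simp add: emeasure_bind[OF _ measurable_distr_minmax_vec] nn_integral_density
        nn_integral_count_space_finite)
  also have "\<dots> = (\<Sum>i\<in>cube01 d. ennreal (p i * (\<Prod>j<d. minmax_cdf (i j) (measure (\<nu>s j) {..a j}))))"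
    by (intro sum.cong refl) (simp add: emeasure_distr_minmax_vec_lower_box assms nonneg ennreal_mult)
  also have "\<dots> = ennreal (\<Sum>i\<in>cube01 d. p i * (\<Prod>j<d. minmax_cdf (i j) (measure (\<nu>s j) {..a j})))"
    by (rule sum_ennreal) (simp add: assms nonneg)
  finally show ?thesis .
qed

lemma distr_eq_minmax_mixture:
  assumes "prob_space M" and V: "V \<in> measurable M (borel_vec d)"
    and p_nonneg: "\<And>i. i \<in> cube01 d \<Longrightarrow> 0 \<le> p i"
    and cdf: "\<And>a. measure M {\<omega>\<in>space M. \<forall>j<d. V \<omega> j \<le> a j}
        = (\<Sum>i\<in>cube01 d. p i * (\<Prod>j<d. minmax_cdf (i j) (measure (\<nu>s j) {..a j})))"
  shows "distr M (borel_vec d) V = minmax_mixture d p"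
proof (rule measure_eqI_lower_boxes[OF _ sets_minmax_mixture])
  interpret M: prob_space M by fact
  show "finite_measure (distr M (borel_vec d) V)" by (rule M.finite_measure_distr[OF V])
  show "emeasure (distr M (borel_vec d) V) (lower_box d a)
      = emeasure (minmax_mixture d p) (lower_box d a)" for a
    by (simp add: emeasure_distr[OF V] vimage_lower_box[OF V] M.emeasure_eq_measure cdf
        emeasure_minmax_mixture_lower_box p_nonneg)
qed simp

lemma nn_integral_eq_minmax_mixture:
  assumes "prob_space M" and V: "V \<in> measurable M (borel_vec d)"
    and p_nonneg: "\<And>i. i \<in> cube01 d \<Longrightarrow> 0 \<le> p i"
    and cdf: "\<And>a. measure M {\<omega>\<in>space M. \<forall>j<d. V \<omega> j \<le> a j}
        = (\<Sum>i\<in>cube01 d. p i * (\<Prod>j<d. minmax_cdf (i j) (measure (\<nu>s j) {..a j})))"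
    and g: "g \<in> borel_measurable (borel_vec d)"
  shows "(\<integral>\<^sup>+\<omega>. g (V \<omega>) \<partial>M)
       = (\<Sum>i\<in>cube01 d. ennreal (p i) * (\<integral>\<^sup>+w. g (minmax_vec d i w) \<partial>pair_copies d \<nu>s))"
proof -
  have "(\<integral>\<^sup>+\<omega>. g (V \<omega>) \<partial>M) = (\<integral>\<^sup>+y. g y \<partial>distr M (borel_vec d) V)"
    by (simp add: nn_integral_distr V g)
  then show ?thesis
    by (simp add: distr_eq_minmax_mixture[OF assms(1-4)] nn_integral_minmax_mixture[OF g])
qed

end

section \<open>Supermodularity of the aggregate functional\<close>

lemma convex_on_increment_mono:
  fixes \<psi> :: "real \<Rightarrow> real"
  assumes cv: "convex_on UNIV \<psi>" and "\<alpha> \<le> \<beta>" and "0 \<le> \<delta>"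
  shows "\<psi> (\<alpha> + \<delta>) + \<psi> \<beta> \<le> \<psi> \<alpha> + \<psi> (\<beta> + \<delta>)"
proof (cases "\<delta> = 0 \<or> \<alpha> = \<beta>")
  case True
  then show ?thesis by auto
next
  case False
  define t where "t = \<delta> / (\<beta> + \<delta> - \<alpha>)"
  have t: "0 \<le> t" "t \<le> 1" "t * (\<beta> + \<delta> - \<alpha>) = \<delta>"
    using False assms(2,3) by (auto simp: t_def field_simps)
  have "\<psi> ((1 - t) * \<alpha> + t * (\<beta> + \<delta>)) \<le> (1 - t) * \<psi> \<alpha> + t * \<psi> (\<beta> + \<delta>)"
    using convex_onD[OF cv, of t \<alpha> "\<beta> + \<delta>"] t by simp
  moreover have "(1 - t) * \<alpha> + t * (\<beta> + \<delta>) = \<alpha> + \<delta>"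
    using t(3) by (simp add: algebra_simps)
  ultimately have left: "\<psi> (\<alpha> + \<delta>) \<le> (1 - t) * \<psi> \<alpha> + t * \<psi> (\<beta> + \<delta>)" by simp
  have "\<psi> ((1 - (1 - t)) * \<alpha> + (1 - t) * (\<beta> + \<delta>)) \<le> (1 - (1 - t)) * \<psi> \<alpha> + (1 - t) * \<psi> (\<beta> + \<delta>)"
    using convex_onD[OF cv, of "1 - t" \<alpha> "\<beta> + \<delta>"] t by simp
  moreover have "(1 - (1 - t)) * \<alpha> + (1 - t) * (\<beta> + \<delta>) = \<beta>"
    using t(3) by (simp add: algebra_simps)
  ultimately have right: "\<psi> \<beta> \<le> t * \<psi> \<alpha> + (1 - t) * \<psi> (\<beta> + \<delta>)" by simp
  from left right show ?thesis by (simp add: algebra_simps)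
qed

lemma convex_mono_increasing_differences:
  fixes \<psi> :: "real \<Rightarrow> real"
  assumes "mono \<psi>" "convex_on UNIV \<psi>"
    and "\<alpha> \<le> \<beta>" "\<alpha> \<le> \<alpha>'" "\<alpha>' + \<beta> \<le> \<beta>' + \<alpha>"
  shows "\<psi> \<alpha>' + \<psi> \<beta> \<le> \<psi> \<beta>' + \<psi> \<alpha>"
proof -
  have "\<psi> (\<alpha> + (\<alpha>' - \<alpha>)) + \<psi> \<beta> \<le> \<psi> \<alpha> + \<psi> (\<beta> + (\<alpha>' - \<alpha>))"
    using assms by (intro convex_on_increment_mono) auto
  moreover have "\<psi> (\<beta> + (\<alpha>' - \<alpha>)) \<le> \<psi> \<beta>'" using assms by (intro monoD[OF assms(1)]) auto
  ultimately show ?thesis by simp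
qed

text \<open>Coordinate \<open>0\<close> plays the claim number and coordinates \<open>1, \<dots>, d - 1\<close> the claim
  amounts; the positive parts make the functional monotone without any sign condition on the
  coordinates.\<close>
definition agg_vec :: "nat \<Rightarrow> (nat \<Rightarrow> real) \<Rightarrow> real" where
  "agg_vec d x = (\<Sum>l\<in>{1..<d}. if real l \<le> x 0 then max (x l) 0 else 0)"

lemma agg_vec_nonneg: "0 \<le> agg_vec d x"
  unfolding agg_vec_def by (intro sum_nonneg) auto

lemma agg_vec_mono:
  assumes "\<And>m. m < d \<Longrightarrow> x m \<le> y m"
  shows "agg_vec d x \<le> agg_vec d y"
  unfolding agg_vec_def
proof (intro sum_mono)
  fix l assume "l \<in> {1..<d}"
  then have "x 0 \<le> y 0" "x l \<le> y l" using assms by auto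
  then show "(if real l \<le> x 0 then max (x l) 0 else 0) \<le> (if real l \<le> y 0 then max (y l) 0 else 0)"
    by auto
qed

lemma agg_vec_supermodular:
  assumes le: "\<And>m. m < d \<Longrightarrow> u m \<le> v m" and j: "j < d" and "u j = v j" "v j \<le> b"
  shows "agg_vec d (u(j := b)) + agg_vec d v \<le> agg_vec d (v(j := b)) + agg_vec d u"
proof -
  define t where "t l z = (if real l \<le> z 0 then max (z l) 0 else 0)" for l and z :: "nat \<Rightarrow> real"
  have "t l (u(j := b)) + t l v \<le> t l (v(j := b)) + t l u" if l: "l \<in> {1..<d}" for l
  proof -
    have "u 0 \<le> v 0" "u l \<le> v l" using le l by auto
    consider "j = 0" | "j \<noteq> 0" "l = j" | "j \<noteq> 0" "l \<noteq> j" by blast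
    then show ?thesis
      by cases (use assms(3,4) \<open>u 0 \<le> v 0\<close> \<open>u l \<le> v l\<close> in \<open>auto simp: t_def le_max_iff_disj\<close>)
  qed
  then have "(\<Sum>l\<in>{1..<d}. t l (u(j := b)) + t l v) \<le> (\<Sum>l\<in>{1..<d}. t l (v(j := b)) + t l u)"
    by (rule sum_mono)
  then show ?thesis by (simp add: agg_vec_def t_def sum.distrib)
qed

lemma measurable_agg_vec [measurable]: "agg_vec d \<in> borel_measurable (borel_vec d)"
proof -
  have [measurable]: "(\<lambda>x. x m) \<in> borel_measurable (borel_vec d)" if "m < d" for m
    unfolding borel_vec_def using that by (intro measurable_component_singleton) auto
  show ?thesis
    unfolding agg_vec_def by (intro borel_measurable_sum) measurable
qed

lemma minmax_vec_mono:
  assumes "x \<in> cube01 d" "y \<in> cube01 d" "\<And>m. m < d \<Longrightarrow> x m \<le> y m" "m < d"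
  shows "minmax_vec d x w m \<le> minmax_vec d y w m"
  using cube01_cases[OF assms(1,4)] cube01_cases[OF assms(2,4)] assms(3)[OF assms(4)] assms(4)
  by (auto simp: minmax_vec_def minmax_0_le)

lemma minmax_vec_fun_upd:
  "j < d \<Longrightarrow> minmax_vec d (i(j := b)) w = (minmax_vec d i w)(j := minmax b (w j))"
  by (auto simp: minmax_vec_def restrict_def)

lemma convex_agg_minmax_vec_supermodular:
  fixes \<psi> :: "real \<Rightarrow> real"
  assumes mono: "mono \<psi>" and convex: "convex_on UNIV \<psi>"
    and x: "x \<in> cube01 d" and y: "y \<in> cube01 d" and j: "j < d"
    and le: "\<And>m. m < d \<Longrightarrow> x m \<le> y m" and x0: "x j = 0" and y0: "y j = 0"
  shows "\<psi> (agg_vec d (minmax_vec d (x(j := 1)) w)) + \<psi> (agg_vec d (minmax_vec d y w))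
       \<le> \<psi> (agg_vec d (minmax_vec d (y(j := 1)) w)) + \<psi> (agg_vec d (minmax_vec d x w))"
proof (rule convex_mono_increasing_differences[OF mono convex])
  have "minmax_vec d x w j = minmax_vec d y w j" using j x0 y0 by (simp add: minmax_vec_def)
  moreover have "minmax_vec d y w j \<le> minmax 1 (w j)"
    using j y0 by (simp add: minmax_vec_def minmax_0_le)
  ultimately show "agg_vec d (minmax_vec d (x(j := 1)) w) + agg_vec d (minmax_vec d y w)
      \<le> agg_vec d (minmax_vec d (y(j := 1)) w) + agg_vec d (minmax_vec d x w)"
    unfolding minmax_vec_fun_upd[OF j] by (intro agg_vec_supermodular minmax_vec_mono[OF x y le] j)
  show "agg_vec d (minmax_vec d x w) \<le> agg_vec d (minmax_vec d y w)"
    by (intro agg_vec_mono minmax_vec_mono[OF x y le])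
  show "agg_vec d (minmax_vec d x w) \<le> agg_vec d (minmax_vec d (x(j := 1)) w)"
    by (intro agg_vec_mono minmax_vec_mono[OF x fun_upd_one_in_cube01[OF x j]]) (use x0 in auto)
qed

context borel_prob_family
begin

definition minmax_mean :: "(real \<Rightarrow> real) \<Rightarrow> nat \<Rightarrow> (nat \<Rightarrow> nat) \<Rightarrow> ennreal" where
  "minmax_mean \<psi> d i = (\<integral>\<^sup>+w. ennreal (\<psi> (agg_vec d (minmax_vec d i w))) \<partial>pair_copies d \<nu>s)"

lemma minmax_mean_mono:
  assumes "mono \<psi>" "x \<in> cube01 d" "y \<in> cube01 d" "\<And>m. m < d \<Longrightarrow> x m \<le> y m"
  shows "minmax_mean \<psi> d x \<le> minmax_mean \<psi> d y"
  unfolding minmax_mean_def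
  by (intro nn_integral_mono ennreal_leI monoD[OF assms(1)] agg_vec_mono minmax_vec_mono assms(2-))

lemma supermodular_minmax_mean:
  assumes mono: "mono \<psi>" and convex: "convex_on UNIV \<psi>" and "\<psi> 0 = 0"
  shows "supermodular_on_cube01 d (minmax_mean \<psi> d)"
  unfolding supermodular_on_cube01_def
proof (intro ballI allI impI)
  fix x y j assume x: "x \<in> cube01 d" and y: "y \<in> cube01 d" and j: "j < d"
    and le: "\<forall>m<d. x m \<le> y m" and x0: "x j = 0" and y0: "y j = 0"
  have [measurable]: "(\<lambda>w. ennreal (\<psi> (agg_vec d (minmax_vec d i w))))
      \<in> borel_measurable (pair_copies d \<nu>s)" for i
    using measurable_minmax_vec by (intro measurable_compose[OF _ measurable_ennreal]
        measurable_compose[OF _ borel_measurable_mono[OF mono]]) measurable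
  have nonneg: "0 \<le> \<psi> (agg_vec d z)" for z
    using monoD[OF mono agg_vec_nonneg] \<open>\<psi> 0 = 0\<close> by metis
  have pointwise: "\<psi> (agg_vec d (minmax_vec d (x(j := 1)) w)) + \<psi> (agg_vec d (minmax_vec d y w))
      \<le> \<psi> (agg_vec d (minmax_vec d (y(j := 1)) w)) + \<psi> (agg_vec d (minmax_vec d x w))" for w
    using le by (intro convex_agg_minmax_vec_supermodular[OF mono convex x y j]) (simp_all add: x0 y0)
  have "minmax_mean \<psi> d (x(j := 1)) + minmax_mean \<psi> d y
      = (\<integral>\<^sup>+w. ennreal (\<psi> (agg_vec d (minmax_vec d (x(j := 1)) w)))
           + ennreal (\<psi> (agg_vec d (minmax_vec d y w))) \<partial>pair_copies d \<nu>s)"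
    unfolding minmax_mean_def by (rule nn_integral_add[symmetric]) measurable
  also have "\<dots> \<le> (\<integral>\<^sup>+w. ennreal (\<psi> (agg_vec d (minmax_vec d (y(j := 1)) w)))
           + ennreal (\<psi> (agg_vec d (minmax_vec d x w))) \<partial>pair_copies d \<nu>s)"
    using pointwise by (intro nn_integral_mono) (simp add: nonneg flip: ennreal_plus)
  also have "\<dots> = minmax_mean \<psi> d (y(j := 1)) + minmax_mean \<psi> d x"
    unfolding minmax_mean_def by (rule nn_integral_add) measurable
  finally show "minmax_mean \<psi> d (x(j := 1)) + minmax_mean \<psi> d y
      \<le> minmax_mean \<psi> d (y(j := 1)) + minmax_mean \<psi> d x" .
qed

end

section \<open>Truncated aggregate claims\<close>

definition trunc_agg :: "nat \<Rightarrow> ('a \<Rightarrow> nat) \<Rightarrow> (nat \<Rightarrow> 'a \<Rightarrow> real) \<Rightarrow> 'a \<Rightarrow> real" where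
  "trunc_agg K N X \<omega> = (\<Sum>j\<in>{1..K}. if j \<le> N \<omega> then max (X j \<omega>) 0 else 0)"

lemma trunc_agg_eq: "trunc_agg K N X \<omega> = (\<Sum>j\<in>{1..min K (N \<omega>)}. max (X j \<omega>) 0)"
proof -
  have "trunc_agg K N X \<omega> = (\<Sum>j\<in>{j\<in>{1..K}. j \<le> N \<omega>}. max (X j \<omega>) 0)"
    unfolding trunc_agg_def by (rule sum.inter_filter[symmetric]) simp
  also have "{j\<in>{1..K}. j \<le> N \<omega>} = {1..min K (N \<omega>)}" by auto
  finally show ?thesis .
qed

lemma trunc_agg_0 [simp]: "trunc_agg 0 N X \<omega> = 0"
  by (simp add: trunc_agg_def)

lemma trunc_agg_mono: "K \<le> K' \<Longrightarrow> trunc_agg K N X \<omega> \<le> trunc_agg K' N X \<omega>"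
  unfolding trunc_agg_eq by (intro sum_mono2) auto

lemma trunc_agg_Suc: "N \<omega> \<le> K \<Longrightarrow> trunc_agg (Suc K) N X \<omega> = trunc_agg K N X \<omega>"
  by (simp add: trunc_agg_eq min_absorb2)

lemma trunc_agg_eq_agg:
  assumes "N \<omega> \<le> K" "\<And>j. 1 \<le> j \<Longrightarrow> 0 < X j \<omega>"
  shows "trunc_agg K N X \<omega> = agg N X \<omega>"
  unfolding trunc_agg_eq agg_def min_absorb2[OF assms(1)]
proof (rule sum.cong)
  fix j assume "j \<in> {1..N \<omega>}"
  then show "max (X j \<omega>) 0 = X j \<omega>" using assms(2)[of j] by simp
qed simp

lemma trunc_agg_le_agg:
  assumes "\<And>j. 1 \<le> j \<Longrightarrow> 0 < X j \<omega>"
  shows "trunc_agg K N X \<omega> \<le> agg N X \<omega>"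
proof -
  have "trunc_agg K N X \<omega> \<le> trunc_agg (max K (N \<omega>)) N X \<omega>" by (rule trunc_agg_mono) simp
  also have "\<dots> = agg N X \<omega>" by (rule trunc_agg_eq_agg) (simp_all add: assms)
  finally show ?thesis .
qed

lemma measurable_trunc_agg [measurable]:
  assumes [measurable]: "N \<in> measurable M (count_space UNIV)"
    and X: "\<And>j. 1 \<le> j \<Longrightarrow> X j \<in> borel_measurable M"
  shows "trunc_agg K N X \<in> borel_measurable M"
  unfolding trunc_agg_def
proof (intro borel_measurable_sum)
  fix j assume "j \<in> {1..K}"
  then have [measurable]: "X j \<in> borel_measurable M" using X by auto
  have [measurable]: "{\<omega> \<in> space M. j \<le> N \<omega>} \<in> sets M" by measurable
  show "(\<lambda>\<omega>. if j \<le> N \<omega> then max (X j \<omega>) 0 else 0) \<in> borel_measurable M" by measurable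
qed

definition crm_vec :: "nat \<Rightarrow> ('a \<Rightarrow> nat) \<Rightarrow> (nat \<Rightarrow> 'a \<Rightarrow> real) \<Rightarrow> 'a \<Rightarrow> nat \<Rightarrow> real" where
  "crm_vec K N X \<omega> = (\<lambda>j\<in>{..<Suc K}. if j = 0 then real (N \<omega>) else X j \<omega>)"

lemma agg_vec_crm_vec: "agg_vec (Suc K) (crm_vec K N X \<omega>) = trunc_agg K N X \<omega>"
  unfolding agg_vec_def trunc_agg_def crm_vec_def by (intro sum.cong) auto

lemma crm_vec_le_iff:
  "(\<forall>j<Suc K. crm_vec K N X \<omega> j \<le> a j) \<longleftrightarrow> real (N \<omega>) \<le> a 0 \<and> (\<forall>j\<in>{1..K}. X j \<omega> \<le> a j)"
proof
  assume le: "\<forall>j<Suc K. crm_vec K N X \<omega> j \<le> a j"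
  have "X j \<omega> \<le> a j" if "j \<in> {1..K}" for j
    using le[rule_format, of j] that by (simp add: crm_vec_def)
  moreover have "real (N \<omega>) \<le> a 0" using le[rule_format, of 0] by (simp add: crm_vec_def)
  ultimately show "real (N \<omega>) \<le> a 0 \<and> (\<forall>j\<in>{1..K}. X j \<omega> \<le> a j)" by blast
next
  assume *: "real (N \<omega>) \<le> a 0 \<and> (\<forall>j\<in>{1..K}. X j \<omega> \<le> a j)"
  show "\<forall>j<Suc K. crm_vec K N X \<omega> j \<le> a j"
  proof (intro allI impI)
    fix j assume "j < Suc K"
    then show "crm_vec K N X \<omega> j \<le> a j" using * by (cases j) (auto simp: crm_vec_def)
  qed
qed

lemma measurable_crm_vec:
  assumes "N \<in> measurable M (count_space UNIV)" "\<And>j. 1 \<le> j \<Longrightarrow> X j \<in> borel_measurable M"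
  shows "crm_vec K N X \<in> measurable M (borel_vec (Suc K))"
  unfolding crm_vec_def borel_vec_def
proof (intro measurable_restrict)
  fix j
  have "(\<lambda>\<omega>. real (N \<omega>)) \<in> borel_measurable M" by (rule measurable_compose[OF assms(1)]) simp
  then show "(\<lambda>\<omega>. if j = 0 then real (N \<omega>) else X j \<omega>) \<in> borel_measurable M"
    using assms(2)[of j] by (cases "j = 0") simp_all
qed

lemma crm_fgmD:
  assumes "crm_fgm M N X FN FX \<theta>"
  shows "prob_space M" "N \<in> measurable M (count_space UNIV)"
    "\<And>j. 1 \<le> j \<Longrightarrow> X j \<in> borel_measurable M"
    "\<And>j \<omega>. 1 \<le> j \<Longrightarrow> \<omega> \<in> space M \<Longrightarrow> 0 < X j \<omega>"
    "\<And>t. measure M {\<omega>\<in>space M. real (N \<omega>) \<le> t} = FN t"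
    "\<And>j x. 1 \<le> j \<Longrightarrow> measure M {\<omega>\<in>space M. X j \<omega> \<le> x} = FX x"
  using assms unfolding crm_fgm_def by auto

lemma crm_fgm_copula:
  assumes "crm_fgm M N X FN FX \<theta>" "1 \<le> K" "below_sup_support M N K"
  shows "fgm_valid (Suc K) \<theta>"
    "measure M {\<omega>\<in>space M. \<forall>j<Suc K. crm_vec K N X \<omega> j \<le> a j}
     = fgm_copula (Suc K) \<theta> (\<lambda>m. if m = 0 then FN (a 0) else FX (a m))"
  using assms unfolding crm_fgm_def crm_vec_le_iff by auto

lemma measure_N_eq:
  assumes crm: "crm_fgm M N X FN FX \<theta>"
  shows "measure M {\<omega>\<in>space M. N \<omega> = n} = FN (real n) - FN (real n - 1)"
proof -
  interpret prob_space M using crm_fgmD[OF crm] by simp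
  have [measurable]: "N \<in> measurable M (count_space UNIV)" using crm_fgmD[OF crm] by simp
  have "{\<omega>\<in>space M. N \<omega> = n}
      = {\<omega>\<in>space M. real (N \<omega>) \<le> real n} - {\<omega>\<in>space M. real (N \<omega>) \<le> real n - 1}"
    by auto
  also have "measure M \<dots>
      = measure M {\<omega>\<in>space M. real (N \<omega>) \<le> real n} - measure M {\<omega>\<in>space M. real (N \<omega>) \<le> real n - 1}"
    by (rule finite_measure_Diff) (measurable, auto)
  finally have "measure M {\<omega>\<in>space M. N \<omega> = n}
      = measure M {\<omega>\<in>space M. real (N \<omega>) \<le> real n} - measure M {\<omega>\<in>space M. real (N \<omega>) \<le> real n - 1}"
    by simp
  then show ?thesis by (simp only: crm_fgmD(5)[OF crm])
qed

lemma below_sup_support_cong: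
  assumes "crm_fgm M N X FN FX \<theta>" "crm_fgm M' N' X' FN FX \<theta>'"
  shows "below_sup_support M N K \<longleftrightarrow> below_sup_support M' N' K"
  unfolding below_sup_support_def using measure_N_eq[OF assms(1)] measure_N_eq[OF assms(2)] by simp

lemma AE_N_le:
  assumes crm: "crm_fgm M N X FN FX \<theta>" and "\<not> below_sup_support M N (Suc k)"
  shows "AE \<omega> in M. N \<omega> \<le> k"
proof -
  interpret prob_space M using crm_fgmD[OF crm] by simp
  have [measurable]: "N \<in> measurable M (count_space UNIV)" using crm_fgmD[OF crm] by simp
  have "AE \<omega> in M. N \<omega> \<noteq> n" if "Suc k \<le> n" for n
  proof (rule AE_I')
    have "\<not> measure M {\<omega>\<in>space M. N \<omega> = n} > 0"
      using assms(2) that unfolding below_sup_support_def by blast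
    then have "measure M {\<omega>\<in>space M. N \<omega> = n} = 0"
      using measure_nonneg[of M "{\<omega>\<in>space M. N \<omega> = n}"] by linarith
    then show "{\<omega>\<in>space M. N \<omega> = n} \<in> null_sets M"
      by (intro null_setsI) (simp_all add: emeasure_eq_measure)
  qed auto
  then have "AE \<omega> in M. \<forall>n. Suc k \<le> n \<longrightarrow> N \<omega> \<noteq> n" by (simp add: AE_all_countable)
  then show ?thesis by eventually_elim (metis not_less_eq_eq order_refl)
qed

locale crm_marginals = borel_prob_family +
  fixes FN FX :: "real \<Rightarrow> real"
  assumes cdf_N: "\<And>t. measure (\<nu>s 0) {..t} = FN t"
    and cdf_X: "\<And>j x. 1 \<le> j \<Longrightarrow> measure (\<nu>s j) {..x} = FX x"
begin

lemma nn_integral_trunc_agg_eq_mixture: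
  assumes crm: "crm_fgm M N X FN FX \<theta>" and K: "1 \<le> K" "below_sup_support M N K"
    and mono: "mono \<psi>"
  shows "(\<integral>\<^sup>+\<omega>. ennreal (\<psi> (trunc_agg K N X \<omega>)) \<partial>M)
       = (\<Sum>i\<in>cube01 (Suc K). ennreal (fgm_pmf (Suc K) \<theta> i) * minmax_mean \<psi> (Suc K) i)"
proof -
  have cdf: "measure M {\<omega>\<in>space M. \<forall>j<Suc K. crm_vec K N X \<omega> j \<le> a j}
      = (\<Sum>i\<in>cube01 (Suc K). fgm_pmf (Suc K) \<theta> i * (\<Prod>j<Suc K. minmax_cdf (i j) (measure (\<nu>s j) {..a j})))"
    for a
    unfolding crm_fgm_copula(2)[OF crm K] fgm_copula_eq_mixture
    by (intro sum.cong refl arg_cong2[where f = "(*)"] prod.cong) (auto simp: cdf_N cdf_X)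
  have [measurable]: "(\<lambda>x. ennreal (\<psi> (agg_vec (Suc K) x))) \<in> borel_measurable (borel_vec (Suc K))"
    by (intro measurable_compose[OF _ measurable_ennreal]
        measurable_compose[OF _ borel_measurable_mono[OF mono]])
      measurable
  have "(\<integral>\<^sup>+\<omega>. ennreal (\<psi> (trunc_agg K N X \<omega>)) \<partial>M)
      = (\<integral>\<^sup>+\<omega>. ennreal (\<psi> (agg_vec (Suc K) (crm_vec K N X \<omega>))) \<partial>M)"
    by (simp add: agg_vec_crm_vec)
  also have "\<dots> = (\<Sum>i\<in>cube01 (Suc K). ennreal (fgm_pmf (Suc K) \<theta> i) * minmax_mean \<psi> (Suc K) i)"
    unfolding minmax_mean_def
    by (rule nn_integral_eq_minmax_mixture[OF crm_fgmD(1)[OF crm] measurable_crm_vec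
          fgm_pmf_nonneg[OF crm_fgm_copula(1)[OF crm K]] cdf])
      (use crm_fgmD[OF crm] in auto)
  finally show ?thesis .
qed

lemma nn_integral_trunc_agg_le_comonotone_within_support:
  assumes crm: "crm_fgm M N X FN FX \<theta>" and crm': "crm_fgm M' N' X' FN FX \<theta>'"
    and como: "fgm_comonotone M' N' \<theta>'"
    and mono: "mono \<psi>" and convex: "convex_on UNIV \<psi>" and "\<psi> 0 = 0"
    and K: "1 \<le> K" "below_sup_support M N K"
    and fin: "(\<integral>\<^sup>+\<omega>. ennreal (\<psi> (trunc_agg K N' X' \<omega>)) \<partial>M') \<noteq> \<infinity>"
  shows "(\<integral>\<^sup>+\<omega>. ennreal (\<psi> (trunc_agg K N X \<omega>)) \<partial>M) \<le> (\<integral>\<^sup>+\<omega>. ennreal (\<psi> (trunc_agg K N' X' \<omega>)) \<partial>M')"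
proof -
  have K': "below_sup_support M' N' K" using K(2) below_sup_support_cong[OF crm crm'] by simp
  note valid = crm_fgm_copula(1)[OF crm K] and valid' = crm_fgm_copula(1)[OF crm' K(1) K']
  note zero_one = fgm_comonotoneD[OF como K(1) K']
  have comonotone: "(\<integral>\<^sup>+\<omega>. ennreal (\<psi> (trunc_agg K N' X' \<omega>)) \<partial>M')
      = ennreal (1/2) * (minmax_mean \<psi> (Suc K) (cube_zero (Suc K))
          + minmax_mean \<psi> (Suc K) (cube_one (Suc K)))"
    by (simp add: nn_integral_trunc_agg_eq_mixture[OF crm' K(1) K' mono]
        sum_fgm_pmf_comonotone[OF _ valid' zero_one])
  have fin_top: "minmax_mean \<psi> (Suc K) (cube_one (Suc K)) \<noteq> \<infinity>"
    using fin unfolding comonotone by (auto simp: ennreal_mult_eq_top_iff)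
  have "minmax_mean \<psi> (Suc K) i \<noteq> \<infinity>" if "i \<in> cube01 (Suc K)" for i
    using minmax_mean_mono[OF mono that cube_one_in_cube01 cube01_le_cube_one[OF that]] fin_top
    by (auto simp: top_unique)
  then show ?thesis
    unfolding nn_integral_trunc_agg_eq_mixture[OF crm K mono]
      nn_integral_trunc_agg_eq_mixture[OF crm' K(1) K' mono]
    by (intro sum_fgm_pmf_le_comonotone valid valid' zero_one supermodular_minmax_mean mono convex
        \<open>\<psi> 0 = 0\<close>) simp_all
qed

lemma nn_integral_trunc_agg_le_comonotone:
  assumes crm: "crm_fgm M N X FN FX \<theta>" and crm': "crm_fgm M' N' X' FN FX \<theta>'"
    and como: "fgm_comonotone M' N' \<theta>'"
    and mono: "mono \<psi>" and convex: "convex_on UNIV \<psi>" and "\<psi> 0 = 0"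
    and fin: "(\<integral>\<^sup>+\<omega>. ennreal (\<psi> (agg N' X' \<omega>)) \<partial>M') \<noteq> \<infinity>"
  shows "(\<integral>\<^sup>+\<omega>. ennreal (\<psi> (trunc_agg K N X \<omega>)) \<partial>M) \<le> (\<integral>\<^sup>+\<omega>. ennreal (\<psi> (trunc_agg K N' X' \<omega>)) \<partial>M')"
proof (induction K)
  case 0
  show ?case by (simp add: \<open>\<psi> 0 = 0\<close>)
next
  case (Suc k)
  show ?case
  proof (cases "below_sup_support M N (Suc k)")
    case True
    have "(\<integral>\<^sup>+\<omega>. ennreal (\<psi> (trunc_agg (Suc k) N' X' \<omega>)) \<partial>M') \<le> (\<integral>\<^sup>+\<omega>. ennreal (\<psi> (agg N' X' \<omega>)) \<partial>M')"
      using crm_fgmD(4)[OF crm']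
      by (intro nn_integral_mono ennreal_leI monoD[OF mono] trunc_agg_le_agg) auto
    then have "(\<integral>\<^sup>+\<omega>. ennreal (\<psi> (trunc_agg (Suc k) N' X' \<omega>)) \<partial>M') \<noteq> \<infinity>"
      using fin by (auto simp: top_unique)
    then show ?thesis
      by (intro nn_integral_trunc_agg_le_comonotone_within_support[OF crm crm' como mono convex] True)
        (simp_all add: \<open>\<psi> 0 = 0\<close>)
  next
    case False
    then have False': "\<not> below_sup_support M' N' (Suc k)"
      using below_sup_support_cong[OF crm crm'] by simp
    have "(\<integral>\<^sup>+\<omega>. ennreal (\<psi> (trunc_agg (Suc k) N X \<omega>)) \<partial>M) = (\<integral>\<^sup>+\<omega>. ennreal (\<psi> (trunc_agg k N X \<omega>)) \<partial>M)"
      using AE_N_le[OF crm False] by (intro nn_integral_cong_AE) (auto simp: trunc_agg_Suc)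
    also have "\<dots> \<le> (\<integral>\<^sup>+\<omega>. ennreal (\<psi> (trunc_agg k N' X' \<omega>)) \<partial>M')" by (rule Suc.IH)
    also have "\<dots> = (\<integral>\<^sup>+\<omega>. ennreal (\<psi> (trunc_agg (Suc k) N' X' \<omega>)) \<partial>M')"
      using AE_N_le[OF crm' False'] by (intro nn_integral_cong_AE) (auto simp: trunc_agg_Suc)
    finally show ?thesis .
  qed
qed

end

section \<open>Passage to the limit\<close>

lemma agg_nonneg: "(\<And>j. 1 \<le> j \<Longrightarrow> 0 < X j \<omega>) \<Longrightarrow> 0 \<le> agg N X \<omega>"
  unfolding agg_def by (intro sum_nonneg) (auto intro: less_imp_le)

lemma nn_integral_agg_eq_SUP_trunc_agg:
  assumes N: "N \<in> measurable M (count_space UNIV)" and X: "\<And>j. 1 \<le> j \<Longrightarrow> X j \<in> borel_measurable M"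
    and pos: "\<And>j \<omega>. 1 \<le> j \<Longrightarrow> \<omega> \<in> space M \<Longrightarrow> 0 < X j \<omega>" and mono: "mono \<psi>"
  shows "(\<integral>\<^sup>+\<omega>. ennreal (\<psi> (agg N X \<omega>)) \<partial>M) = (SUP K. \<integral>\<^sup>+\<omega>. ennreal (\<psi> (trunc_agg K N X \<omega>)) \<partial>M)"
proof -
  define f where "f K \<omega> = ennreal (\<psi> (trunc_agg K N X \<omega>))" for K \<omega>
  have "incseq f"
    unfolding f_def
    by (intro monoI le_funI ennreal_leI monoD[OF mono] trunc_agg_mono) (simp add: le_fun_def)
  moreover have "f K \<in> borel_measurable M" for K
    unfolding f_def by (intro measurable_compose[OF measurable_trunc_agg[OF N X]
        measurable_compose[OF _ measurable_ennreal]] borel_measurable_mono mono)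
  moreover have "(SUP K. f K \<omega>) = ennreal (\<psi> (agg N X \<omega>))" if "\<omega> \<in> space M" for \<omega>
  proof (rule antisym)
    show "(SUP K. f K \<omega>) \<le> ennreal (\<psi> (agg N X \<omega>))"
      unfolding f_def using pos[OF _ that]
      by (intro SUP_least ennreal_leI monoD[OF mono] trunc_agg_le_agg)
    have "ennreal (\<psi> (agg N X \<omega>)) = f (N \<omega>) \<omega>"
      unfolding f_def using pos[OF _ that] by (simp add: trunc_agg_eq_agg)
    also have "\<dots> \<le> (SUP K. f K \<omega>)" by (rule SUP_upper) simp
    finally show "ennreal (\<psi> (agg N X \<omega>)) \<le> (SUP K. f K \<omega>)" .
  qed
  ultimately show ?thesis
    unfolding f_def[symmetric]
    by (simp add: nn_integral_monotone_convergence_SUP[symmetric] cong: nn_integral_cong)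
qed

lemma crm_marginals_laws:
  assumes crm: "crm_fgm M N X FN FX \<theta>"
  shows "crm_marginals
    (\<lambda>j. if j = 0 then distr M borel (\<lambda>\<omega>. real (N \<omega>)) else distr M borel (X 1)) FN FX"
    (is "crm_marginals ?\<nu>s FN FX")
proof (intro crm_marginals.intro borel_prob_family.intro crm_marginals_axioms.intro)
  interpret M: prob_space M using crm_fgmD(1)[OF crm] .
  have N: "(\<lambda>\<omega>. real (N \<omega>)) \<in> borel_measurable M" and X: "X 1 \<in> borel_measurable M"
    using crm_fgmD(2,3)[OF crm] by (auto intro: measurable_compose)
  show "prob_space (?\<nu>s j)" for j
    using M.prob_space_distr[OF N] M.prob_space_distr[OF X] by simp
  show "sets (?\<nu>s j) = sets borel" for j
    by simp
  show "measure (?\<nu>s 0) {..t} = FN t" for t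
    using crm_fgmD(5)[OF crm] by (simp add: measure_distr[OF N] vimage_def Int_def conj_commute)
  show "measure (?\<nu>s j) {..x} = FX x" if "1 \<le> j" for j x
    using crm_fgmD(6)[OF crm, of 1] that
    by (simp add: measure_distr[OF X] vimage_def Int_def conj_commute del: One_nat_def)
qed

lemma nn_integral_agg_le_comonotone:
  assumes crm: "crm_fgm M N X FN FX \<theta>" and crm': "crm_fgm M' N' X' FN FX \<theta>'"
    and como: "fgm_comonotone M' N' \<theta>'"
    and mono: "mono \<psi>" and convex: "convex_on UNIV \<psi>" and "\<psi> 0 = 0"
    and integrable': "integrable M' (\<lambda>\<omega>. \<psi> (agg N' X' \<omega>))"
  shows "(\<integral>\<^sup>+\<omega>. ennreal (\<psi> (agg N X \<omega>)) \<partial>M) \<le> (\<integral>\<^sup>+\<omega>. ennreal (\<psi> (agg N' X' \<omega>)) \<partial>M')"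
proof -
  interpret crm_marginals
    "\<lambda>j. if j = 0 then distr M borel (\<lambda>\<omega>. real (N \<omega>)) else distr M borel (X 1)" FN FX
    by (rule crm_marginals_laws[OF crm])
  have "(\<integral>\<^sup>+\<omega>. ennreal (\<psi> (agg N' X' \<omega>)) \<partial>M') \<le> (\<integral>\<^sup>+\<omega>. ennreal (norm (\<psi> (agg N' X' \<omega>))) \<partial>M')"
    by (intro nn_integral_mono ennreal_leI) simp
  then have fin: "(\<integral>\<^sup>+\<omega>. ennreal (\<psi> (agg N' X' \<omega>)) \<partial>M') \<noteq> \<infinity>"
    using integrableD(2)[OF integrable'] by (auto simp: top_unique)
  have "(\<integral>\<^sup>+\<omega>. ennreal (\<psi> (agg N X \<omega>)) \<partial>M) = (SUP K. \<integral>\<^sup>+\<omega>. ennreal (\<psi> (trunc_agg K N X \<omega>)) \<partial>M)"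
    by (rule nn_integral_agg_eq_SUP_trunc_agg) (use crm_fgmD[OF crm] mono in auto)
  also have "\<dots> \<le> (SUP K. \<integral>\<^sup>+\<omega>. ennreal (\<psi> (trunc_agg K N' X' \<omega>)) \<partial>M')"
    using nn_integral_trunc_agg_le_comonotone[OF crm crm' como mono convex \<open>\<psi> 0 = 0\<close> fin]
    by (intro SUP_mono) blast
  also have "\<dots> = (\<integral>\<^sup>+\<omega>. ennreal (\<psi> (agg N' X' \<omega>)) \<partial>M')"
    by (rule nn_integral_agg_eq_SUP_trunc_agg[symmetric]) (use crm_fgmD[OF crm'] mono in auto)
  finally show ?thesis .
qed

lemma integral_le_of_nn_integral_shift_le:
  fixes f :: "'a \<Rightarrow> real" and g :: "'b \<Rightarrow> real"
  assumes "prob_space M" "prob_space M'" and f: "integrable M f" and g: "integrable M' g"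
    and "AE \<omega> in M. c \<le> f \<omega>" "AE \<omega> in M'. c \<le> g \<omega>"
    and le: "(\<integral>\<^sup>+\<omega>. ennreal (f \<omega> - c) \<partial>M) \<le> (\<integral>\<^sup>+\<omega>. ennreal (g \<omega> - c) \<partial>M')"
  shows "(\<integral>\<omega>. f \<omega> \<partial>M) \<le> (\<integral>\<omega>. g \<omega> \<partial>M')"
proof -
  interpret M: prob_space M by fact
  interpret M': prob_space M' by fact
  have "(\<integral>\<^sup>+\<omega>. ennreal (f \<omega> - c) \<partial>M) = ennreal ((\<integral>\<omega>. f \<omega> \<partial>M) - c)"
    using assms(5) f by (subst nn_integral_eq_integral) (auto simp: M.prob_space)
  moreover have "(\<integral>\<^sup>+\<omega>. ennreal (g \<omega> - c) \<partial>M') = ennreal ((\<integral>\<omega>. g \<omega> \<partial>M') - c)"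
    using assms(6) g by (subst nn_integral_eq_integral) (auto simp: M'.prob_space)
  moreover have "c \<le> (\<integral>\<omega>. g \<omega> \<partial>M')"
    using integral_mono_AE[OF M'.integrable_const g assms(6)] by (simp add: M'.prob_space)
  ultimately show ?thesis using le by (simp add: ennreal_le_iff)
qed

theorem mainTheorem16:
  fixes M :: "'a measure" and N :: "'a \<Rightarrow> nat" and X :: "nat \<Rightarrow> 'a \<Rightarrow> real"
    and M' :: "'b measure" and N' :: "'b \<Rightarrow> nat" and X' :: "nat \<Rightarrow> 'b \<Rightarrow> real"
    and FN FX :: "real \<Rightarrow> real"
  assumes crm: "\<exists>\<theta>. crm_fgm M N X FN FX \<theta>"
    and crm_como: "\<exists>\<theta>'. crm_fgm M' N' X' FN FX \<theta>' \<and> fgm_comonotone M' N' \<theta>'"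
    and EN: "integrable M (\<lambda>\<omega>. real (N \<omega>))" and EX: "integrable M (X 1)"
    and EN': "integrable M' (\<lambda>\<omega>. real (N' \<omega>))" and EX': "integrable M' (X' 1)"
  shows "\<forall>\<phi> :: real \<Rightarrow> real. mono \<phi> \<and> convex_on UNIV \<phi> \<and>
           integrable M (\<lambda>\<omega>. \<phi> (agg N X \<omega>)) \<and> integrable M' (\<lambda>\<omega>. \<phi> (agg N' X' \<omega>)) \<longrightarrow>
           (\<integral>\<omega>. \<phi> (agg N X \<omega>) \<partial>M) \<le> (\<integral>\<omega>. \<phi> (agg N' X' \<omega>) \<partial>M')"
proof (intro allI impI, elim conjE)
  fix \<phi> :: "real \<Rightarrow> real"
  assume mono: "mono \<phi>" and convex: "convex_on UNIV \<phi>"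
    and int: "integrable M (\<lambda>\<omega>. \<phi> (agg N X \<omega>))" and int': "integrable M' (\<lambda>\<omega>. \<phi> (agg N' X' \<omega>))"
  obtain \<theta> \<theta>' where crm: "crm_fgm M N X FN FX \<theta>" and crm': "crm_fgm M' N' X' FN FX \<theta>'"
    and como: "fgm_comonotone M' N' \<theta>'"
    using crm crm_como by blast
  interpret M': prob_space M' using crm_fgmD(1)[OF crm'] .
  have "AE \<omega> in M. \<phi> 0 \<le> \<phi> (agg N X \<omega>)" "AE \<omega> in M'. \<phi> 0 \<le> \<phi> (agg N' X' \<omega>)"
    using crm_fgmD(4)[OF crm] crm_fgmD(4)[OF crm'] by (auto intro!: AE_I2 monoD[OF mono] agg_nonneg)
  moreover have "mono (\<lambda>t. \<phi> t - \<phi> 0)" "convex_on UNIV (\<lambda>t. \<phi> t - \<phi> 0)"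
    using mono convex_on_add[OF convex convex_on_const[THEN iffD2, OF convex_UNIV, of "- \<phi> 0"]]
    by (auto simp: mono_def)
  ultimately show "(\<integral>\<omega>. \<phi> (agg N X \<omega>) \<partial>M) \<le> (\<integral>\<omega>. \<phi> (agg N' X' \<omega>) \<partial>M')"
    using int' by (intro integral_le_of_nn_integral_shift_le crm_fgmD(1)[OF crm] crm_fgmD(1)[OF crm']
        int nn_integral_agg_le_comonotone[OF crm crm' como] M'.integrable_const) auto
qed

end
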